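(* Let $q$ be a non-negative integer and $\Lambda$ a unital commutative ring which is $q$-torsion-free. Let $\mathfrak f$ be a free Lie algebra over $\Lambda$ and $\xi^{\wedge}\colon\mathfrak f\wedge^q\mathfrak f\to\mathfrak f$ the homomorphism with $\xi^{\wedge}(x\wedge y)=[x,y]$ and $\xi^{\wedge}(\{x\})=qx$. Then $\xi^{\wedge}$ induces an isomorphism $\mathfrak f\curlywedge^q\mathfrak f\cong[\mathfrak f,\mathfrak f]$.
   Context: All Lie algebras are over $\Lambda$. For $q\ge1$, the non-abelian $q$-exterior square $\mathfrak g\wedge^q\mathfrak g$ is the Lie algebra generated by symbols $h\wedge g$ and $\{h\}$ ($h,g\in\mathfrak g$) subject to, for all $h,h',g,g'\in\mathfrak g$, $\lambda,\lambda'\in\Lambda$: (1) $\lambda(h\wedge g)=\lambda h\wedge g=h\wedge\lambda g$; (2),(3) additivity in each variable; (4) $[h,h']\wedge g=h\wedge[h',g]-h'\wedge[h,g]$; (5) $h\wedge[g,g']=[g',h]\wedge g-[g,h]\wedge g'$; (6) $[h\wedge g,h'\wedge g']=[h,g]\wedge[h',g']$; (7) $[\{h'\},h\wedge g]=[qh',h]\wedge g+h\wedge[qh',g]$; (8) $\{\lambda h+\lambda'h'\}=\lambda\{h\}+\lambda'\{h'\}$; (9) $[\{h\},\{h'\}]=qh\wedge qh'$; (10) $\{[h,g]\}=q(h\wedge g)$; (11) $h\wedge h=0$. For $q=0$, generated by the $h\wedge g$ subject to (1)–(6) and (11) (Ellis's exterior square $\mathfrak g\wedge\mathfrak g$, also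 defined this way for every $q$). $\mathfrak g\curlywedge^q\mathfrak g$ denotes the image of the natural homomorphism $\mathfrak g\wedge\mathfrak g\to\mathfrak g\wedge^q\mathfrak g$, $h\wedge g\mapsto h\wedge g$. *)

theory Defs
  imports Main
begin

datatype ('g, 'r) lterm =
    LGen 'g
  | LZero
  | LAdd "('g, 'r) lterm" "('g, 'r) lterm"
  | LNeg "('g, 'r) lterm"
  | LSmul 'r "('g, 'r) lterm"
  | LBr "('g, 'r) lterm" "('g, 'r) lterm"

text \<open>The quotient by
  lie_cong R is the Lie algebra over 'r presented by generators 'g and relations R.\<close>
inductive lie_cong :: "(('g, 'r) lterm \<times> ('g, 'r) lterm) set \<Rightarrow>
    ('g, 'r::comm_ring_1) lterm \<Rightarrow> ('g, 'r) lterm \<Rightarrow> bool"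
  for R where
  rel: "(a, b) \<in> R \<Longrightarrow> lie_cong R a b"
| refl: "lie_cong R a a"
| sym: "lie_cong R a b \<Longrightarrow> lie_cong R b a"
| trans: "lie_cong R a b \<Longrightarrow> lie_cong R b c \<Longrightarrow> lie_cong R a c"
| cong_add: "lie_cong R a a' \<Longrightarrow> lie_cong R b b' \<Longrightarrow> lie_cong R (LAdd a b) (LAdd a' b')"
| cong_neg: "lie_cong R a a' \<Longrightarrow> lie_cong R (LNeg a) (LNeg a')"
| cong_smul: "lie_cong R a a' \<Longrightarrow> lie_cong R (LSmul l a) (LSmul l a')"
| cong_br: "lie_cong R a a' \<Longrightarrow> lie_cong R b b' \<Longrightarrow> lie_cong R (LBr a b) (LBr a' b')"
| add_assoc: "lie_cong R (LAdd (LAdd a b) c) (LAdd a (LAdd b c))"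
| add_comm: "lie_cong R (LAdd a b) (LAdd b a)"
| add_zero: "lie_cong R (LAdd a LZero) a"
| add_neg: "lie_cong R (LAdd a (LNeg a)) LZero"
| smul_add: "lie_cong R (LSmul l (LAdd a b)) (LAdd (LSmul l a) (LSmul l b))"
| add_smul: "lie_cong R (LSmul (l + m) a) (LAdd (LSmul l a) (LSmul m a))"
| smul_smul: "lie_cong R (LSmul (l * m) a) (LSmul l (LSmul m a))"
| one_smul: "lie_cong R (LSmul 1 a) a"
| br_add_left: "lie_cong R (LBr (LAdd a b) c) (LAdd (LBr a c) (LBr b c))"
| br_add_right: "lie_cong R (LBr a (LAdd b c)) (LAdd (LBr a b) (LBr a c))"
| br_smul_left: "lie_cong R (LBr (LSmul l a) b) (LSmul l (LBr a b))"
| br_smul_right: "lie_cong R (LBr a (LSmul l b)) (LSmul l (LBr a b))"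
| br_alt: "lie_cong R (LBr a a) LZero"
| jacobi: "lie_cong R (LAdd (LBr a (LBr b c)) (LAdd (LBr b (LBr c a)) (LBr c (LBr a b)))) LZero"

lemma lie_cong_equivp: "equivp (lie_cong R)"
  by (rule equivpI; auto intro: reflpI sympI transpI lie_cong.intros)

quotient_type (overloaded) ('x, 'r) freelie = "('x, 'r::comm_ring_1) lterm" / "lie_cong {}"
  by (rule lie_cong_equivp)

lift_definition fl_zero :: "('x, 'r::comm_ring_1) freelie" is LZero .
lift_definition fl_add :: "('x, 'r::comm_ring_1) freelie \<Rightarrow> ('x, 'r) freelie \<Rightarrow> ('x, 'r) freelie"
  is LAdd by (rule lie_cong.cong_add)
lift_definition fl_neg :: "('x, 'r::comm_ring_1) freelie \<Rightarrow> ('x, 'r) freelie"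
  is LNeg by (rule lie_cong.cong_neg)
lift_definition fl_smul :: "'r::comm_ring_1 \<Rightarrow> ('x, 'r) freelie \<Rightarrow> ('x, 'r) freelie"
  is LSmul by (rule lie_cong.cong_smul)
lift_definition fl_br :: "('x, 'r::comm_ring_1) freelie \<Rightarrow> ('x, 'r) freelie \<Rightarrow> ('x, 'r) freelie"
  is LBr by (rule lie_cong.cong_br)

inductive_set fl_derived :: "('x, 'r::comm_ring_1) freelie set" where
  "fl_zero \<in> fl_derived"
| "fl_br x y \<in> fl_derived"
| "a \<in> fl_derived \<Longrightarrow> b \<in> fl_derived \<Longrightarrow> fl_add a b \<in> fl_derived"
| "a \<in> fl_derived \<Longrightarrow> fl_smul l a \<in> fl_derived"

text \<open>Generators: the symbols h \<and> g and {h}, for h, g in f.\<close>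
declare [[typedef_overloaded]]
datatype ('x, 'r) qgen = Wedge "('x, 'r) freelie" "('x, 'r) freelie" | Curly "('x, 'r) freelie"

abbreviation W :: "('x, 'r::comm_ring_1) freelie \<Rightarrow> ('x, 'r) freelie \<Rightarrow> (('x, 'r) qgen, 'r) lterm"
  where "W h g \<equiv> LGen (Wedge h g)"
abbreviation C :: "('x, 'r::comm_ring_1) freelie \<Rightarrow> (('x, 'r) qgen, 'r) lterm"
  where "C h \<equiv> LGen (Curly h)"

text \<open>Relations (1)-(6) and (11) (Ellis' exterior square).\<close>
definition ext_rels :: "((('x, 'r::comm_ring_1) qgen, 'r) lterm \<times> (('x, 'r) qgen, 'r) lterm) set" where
  "ext_rels =
     {(LSmul l (W h g), W (fl_smul l h) g) | l h g. True}
   \<union> {(LSmul l (W h g), W h (fl_smul l g)) | l h g. True}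
   \<union> {(W (fl_add h h') g, LAdd (W h g) (W h' g)) | h h' g. True}
   \<union> {(W h (fl_add g g'), LAdd (W h g) (W h g')) | h g g'. True}
   \<union> {(W (fl_br h h') g, LAdd (W h (fl_br h' g)) (LNeg (W h' (fl_br h g)))) | h h' g. True}
   \<union> {(W h (fl_br g g'), LAdd (W (fl_br g' h) g) (LNeg (W (fl_br g h) g'))) | h g g'. True}
   \<union> {(LBr (W h g) (W h' g'), W (fl_br h g) (fl_br h' g')) | h g h' g'. True}
   \<union> {(W h h, LZero) | h. True}"

text \<open>Relations (7)-(10) involving the symbols {h}, for q \<ge> 1.\<close>
definition curly_rels :: "nat \<Rightarrow> ((('x, 'r::comm_ring_1) qgen, 'r) lterm \<times> (('x, 'r) qgen, 'r) lterm) set" where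
  "curly_rels q =
     {(LBr (C h') (W h g),
       LAdd (W (fl_br (fl_smul (of_nat q) h') h) g) (W h (fl_br (fl_smul (of_nat q) h') g))) | h' h g. True}
   \<union> {(C (fl_add (fl_smul l h) (fl_smul l' h')), LAdd (LSmul l (C h)) (LSmul l' (C h'))) | l l' h h'. True}
   \<union> {(LBr (C h) (C h'), W (fl_smul (of_nat q) h) (fl_smul (of_nat q) h')) | h h'. True}
   \<union> {(C (fl_br h g), LSmul (of_nat q) (W h g)) | h g. True}"

text \<open>Defining relations of f \<wedge>^q f. For q = 0 the algebra is generated by the h \<and> g
  alone; this is encoded by additionally killing the symbols {h}.\<close>
definition qext_rels :: "nat \<Rightarrow> ((('x, 'r::comm_ring_1) qgen, 'r) lterm \<times> (('x, 'r) qgen, 'r) lterm) set" where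
  "qext_rels q = (if q = 0 then ext_rels \<union> {(C h, LZero) | h. True}
                  else ext_rels \<union> curly_rels q)"

abbreviation qext_eq :: "nat \<Rightarrow> (('x, 'r::comm_ring_1) qgen, 'r) lterm \<Rightarrow> (('x, 'r) qgen, 'r) lterm \<Rightarrow> bool"
  where "qext_eq q \<equiv> lie_cong (qext_rels q)"

text \<open>Expressions involving only the generators h \<and> g: they represent exactly the
  elements of the image of f \<wedge> f \<rightarrow> f \<wedge>^q f.\<close>
primrec lgens :: "('g, 'r) lterm \<Rightarrow> 'g set" where
  "lgens (LGen g) = {g}"
| "lgens LZero = {}"
| "lgens (LAdd a b) = lgens a \<union> lgens b"
| "lgens (LNeg a) = lgens a"
| "lgens (LSmul l a) = lgens a"
| "lgens (LBr a b) = lgens a \<union> lgens b"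

definition wedge_terms :: "(('x, 'r) qgen, 'r) lterm set" where
  "wedge_terms = {t. \<forall>g \<in> lgens t. \<exists>h k. g = Wedge h k}"

primrec xi :: "nat \<Rightarrow> (('x, 'r::comm_ring_1) qgen, 'r) lterm \<Rightarrow> ('x, 'r) freelie" where
  "xi q (LGen g) = (case g of Wedge h k \<Rightarrow> fl_br h k | Curly h \<Rightarrow> fl_smul (of_nat q) h)"
| "xi q LZero = fl_zero"
| "xi q (LAdd a b) = fl_add (xi q a) (xi q b)"
| "xi q (LNeg a) = fl_neg (xi q a)"
| "xi q (LSmul l a) = fl_smul l (xi q a)"
| "xi q (LBr a b) = fl_br (xi q a) (xi q b)"

definition q_torsion_free :: "nat \<Rightarrow> 'r::comm_ring_1 itself \<Rightarrow> bool" where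
  "q_torsion_free q _ \<longleftrightarrow> q = 0 \<or> (\<forall>l::'r. of_nat q * l = 0 \<longrightarrow> l = 0)"

end

theory Submission
  imports Defs
begin

text \<open>
  \<xi> respects the defining relations of \<open>f \<and>\<^sup>q f\<close> because it is evaluation in \<open>f\<close>.
  For injectivity we split \<xi> already on Ellis's exterior square \<open>f \<and> f\<close>: since
  \<open>f\<close> is free, there is a linear map \<open>\<tau> : f \<rightarrow> f \<and> f\<close> killing the generators and
  sending \<open>[a, b]\<close> to \<open>a \<and> b\<close>, because \<open>(a, b) \<mapsto> a \<and> b\<close> is bilinear, alternating
  and satisfies the cocycle identity, which are exactly the relations of \<open>f\<close>. In \<open>f \<and> f\<close>
  one has \<open>[x, y] = \<xi>x \<and> \<xi>y\<close>, so \<open>\<tau> \<circ> \<xi>\<close> is the identity on \<open>f \<and> f\<close>. Hence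
  \<open>f \<and> f \<rightarrow> [f, f]\<close> is injective, and so is its factor through \<open>f \<curlywedge>\<^sup>q f\<close>.
\<close>

locale lie_algebra =
  fixes smul :: "'r::comm_ring_1 \<Rightarrow> 'a::ab_group_add \<Rightarrow> 'a"
    and br :: "'a \<Rightarrow> 'a \<Rightarrow> 'a"
  assumes smul_add: "smul l (a + b) = smul l a + smul l b"
    and add_smul: "smul (l + m) a = smul l a + smul m a"
    and smul_smul: "smul (l * m) a = smul l (smul m a)"
    and one_smul: "smul 1 a = a"
    and br_add_left: "br (a + b) c = br a c + br b c"
    and br_add_right: "br a (b + c) = br a b + br a c"
    and br_smul_left: "br (smul l a) b = smul l (br a b)"
    and br_smul_right: "br a (smul l b) = smul l (br a b)"
    and br_self: "br a a = 0"
    and jacobi: "br a (br b c) + (br b (br c a) + br c (br a b)) = 0"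
begin

lemma smul_commute: "smul l (smul m a) = smul m (smul l a)"
  by (metis smul_smul mult.commute)

lemma smul_zero_left [simp]: "smul 0 a = 0"
  using add_smul[of 0 0 a] by simp

lemma smul_minus_one: "smul (-1) a = - a"
  using add_smul[of 1 "-1" a] by (simp add: one_smul eq_neg_iff_add_eq_0 add.commute)

lemma br_zero_left [simp]: "br 0 a = 0"
  using br_add_left[of 0 0 a] by simp

lemma br_zero_right [simp]: "br a 0 = 0"
  using br_add_right[of a 0 0] by simp

lemma br_minus_left: "br (- a) b = - br a b"
  using br_add_left[of a "-a" b] by (simp add: eq_neg_iff_add_eq_0 add.commute)

lemma br_minus_right: "br a (- b) = - br a b"
  using br_add_right[of a b "-b"] by (simp add: eq_neg_iff_add_eq_0 add.commute)

lemma br_anticommute: "br b a = - br a b"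
  using br_self[of "a + b"] br_self[of a] br_self[of b]
  by (simp add: br_add_left br_add_right eq_neg_iff_add_eq_0 add.commute)

lemma br_br_left: "br (br h h') g = br h (br h' g) - br h' (br h g)"
proof -
  have "br g (br h h') = - br (br h h') g" "br h' (br g h) = - br h' (br h g)"
    using br_anticommute br_minus_right by metis+
  with jacobi[of h h' g] show ?thesis
    by (simp add: algebra_simps eq_neg_iff_add_eq_0)
qed

lemma br_br_right: "br h (br g g') = br (br g' h) g - br (br g h) g'"
proof -
  have "br g (br g' h) = - br (br g' h) g" "br g' (br h g) = br (br g h) g'"
    using br_anticommute br_minus_right minus_minus by metis+
  with jacobi[of h g g'] show ?thesis
    by (simp add: algebra_simps eq_neg_iff_add_eq_0)
qed

lemma br_derivation: "br a (br h g) = br (br a h) g + br h (br a g)"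
  using br_br_right[of a h g] br_anticommute[of g a] br_anticommute[of h a]
    br_anticommute[of h "br a g"]
  by (simp add: br_minus_left br_minus_right algebra_simps)

primrec eval :: "('g \<Rightarrow> 'a) \<Rightarrow> ('g, 'r) lterm \<Rightarrow> 'a" where
  "eval f (LGen g) = f g"
| "eval f LZero = 0"
| "eval f (LAdd a b) = eval f a + eval f b"
| "eval f (LNeg a) = - eval f a"
| "eval f (LSmul l a) = smul l (eval f a)"
| "eval f (LBr a b) = br (eval f a) (eval f b)"

lemma eval_lie_cong:
  assumes "lie_cong R a b" and "\<And>a b. (a, b) \<in> R \<Longrightarrow> eval f a = eval f b"
  shows "eval f a = eval f b"
  using assms(1)
  by (induction rule: lie_cong.induct)
    (simp_all add: assms(2) smul_add add_smul smul_smul one_smul br_add_left br_add_right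
      br_smul_left br_smul_right br_self jacobi add.assoc add.commute)

end

lemma lie_cong_mono: "lie_cong R a b \<Longrightarrow> R \<subseteq> R' \<Longrightarrow> lie_cong R' a b"
  by (induction rule: lie_cong.induct) (auto intro: lie_cong.intros)

instantiation freelie :: (type, comm_ring_1) ab_group_add
begin

definition "plus_freelie = fl_add"
definition "zero_freelie = fl_zero"
definition "uminus_freelie = fl_neg"
definition "minus_freelie a b = fl_add a (fl_neg (b :: ('a, 'b) freelie))"

instance
proof
  fix a b c :: "('a, 'b) freelie"
  show "a + b + c = a + (b + c)" unfolding plus_freelie_def
    by transfer (rule lie_cong.add_assoc)
  show "a + b = b + a" unfolding plus_freelie_def
    by transfer (rule lie_cong.add_comm)
  show "0 + a = a" unfolding plus_freelie_def zero_freelie_def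
    by transfer (meson lie_cong.add_comm lie_cong.add_zero lie_cong.trans)
  show "- a + a = 0" unfolding plus_freelie_def zero_freelie_def uminus_freelie_def
    by transfer (meson lie_cong.add_comm lie_cong.add_neg lie_cong.trans)
  show "a - b = a + - b" unfolding plus_freelie_def minus_freelie_def uminus_freelie_def ..
qed

end

lemma fl_group_ops [simp]: "fl_add a b = a + b" "fl_zero = 0" "fl_neg a = - a"
  by (simp_all add: plus_freelie_def zero_freelie_def uminus_freelie_def)

interpretation fl: lie_algebra fl_smul fl_br
  by (unfold_locales; (unfold fl_group_ops[symmetric])?; transfer; rule lie_cong.intros(13-))

lemma abs_freelie_simps:
  "abs_freelie (LAdd a b) = abs_freelie a + abs_freelie b"
  "abs_freelie LZero = 0"
  "abs_freelie (LNeg a) = - abs_freelie a"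
  "abs_freelie (LSmul l a) = fl_smul l (abs_freelie a)"
  "abs_freelie (LBr a b) = fl_br (abs_freelie a) (abs_freelie b)"
  by (simp_all only: fl_group_ops[symmetric] fl_add.abs_eq fl_zero.abs_eq fl_neg.abs_eq
      fl_smul.abs_eq fl_br.abs_eq)

lemma xi_eq_eval: "xi q = fl.eval (case_qgen fl_br (fl_smul (of_nat q)))"
proof
  show "xi q a = fl.eval (case_qgen fl_br (fl_smul (of_nat q))) a" for a
    by (induction a) simp_all
qed

lemma xi_ext_rels: "(a, b) \<in> ext_rels \<Longrightarrow> xi q a = xi q b"
  unfolding ext_rels_def
  by (elim UnE CollectE exE conjE Pair_inject;
      simp add: fl.br_smul_left fl.br_smul_right fl.br_add_left fl.br_add_right fl.br_self;
      rule fl.br_br_left fl.br_br_right)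

lemma xi_curly_rels: "(a, b) \<in> curly_rels q \<Longrightarrow> xi q a = xi q b"
  unfolding curly_rels_def
  by (elim UnE CollectE exE conjE Pair_inject; simp;
      (rule fl.br_derivation | simp add: fl.smul_add fl.smul_commute))

lemma xi_qext_rels: "(a, b) \<in> qext_rels q \<Longrightarrow> xi q a = xi q b"
  unfolding qext_rels_def by (auto simp: xi_ext_rels xi_curly_rels split: if_splits)

lemma xi_qext_eq: "qext_eq q a b \<Longrightarrow> xi q a = xi q b"
  unfolding xi_eq_eval by (erule fl.eval_lie_cong) (rule xi_qext_rels[unfolded xi_eq_eval])

lemma fl_derived_zero: "0 \<in> fl_derived"
  and fl_derived_br: "fl_br x y \<in> fl_derived"
  and fl_derived_add: "a \<in> fl_derived \<Longrightarrow> b \<in> fl_derived \<Longrightarrow> a + b \<in> fl_derived"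
  and fl_derived_smul: "a \<in> fl_derived \<Longrightarrow> fl_smul l a \<in> fl_derived"
  using fl_derived.intros by simp_all

lemma fl_derived_minus: "a \<in> fl_derived \<Longrightarrow> - a \<in> fl_derived"
  using fl_derived_smul[of a "- 1"] by (simp add: fl.smul_minus_one)

quotient_type (overloaded) ('x, 'r) ext_square =
  "(('x, 'r) qgen, 'r::comm_ring_1) lterm" / "lie_cong ext_rels"
  by (rule lie_cong_equivp)

lift_definition ext_zero :: "('x, 'r::comm_ring_1) ext_square" is LZero .
lift_definition ext_add :: "('x, 'r::comm_ring_1) ext_square \<Rightarrow> ('x, 'r) ext_square \<Rightarrow> ('x, 'r) ext_square"
  is LAdd by (rule lie_cong.cong_add)
lift_definition ext_neg :: "('x, 'r::comm_ring_1) ext_square \<Rightarrow> ('x, 'r) ext_square"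
  is LNeg by (rule lie_cong.cong_neg)
lift_definition ext_smul :: "'r::comm_ring_1 \<Rightarrow> ('x, 'r) ext_square \<Rightarrow> ('x, 'r) ext_square"
  is LSmul by (rule lie_cong.cong_smul)
lift_definition ext_br :: "('x, 'r::comm_ring_1) ext_square \<Rightarrow> ('x, 'r) ext_square \<Rightarrow> ('x, 'r) ext_square"
  is LBr by (rule lie_cong.cong_br)

instantiation ext_square :: (type, comm_ring_1) ab_group_add
begin

definition "plus_ext_square = ext_add"
definition "zero_ext_square = ext_zero"
definition "uminus_ext_square = ext_neg"
definition "minus_ext_square a b = ext_add a (ext_neg (b :: ('a, 'b) ext_square))"

instance
proof
  fix a b c :: "('a, 'b) ext_square"
  show "a + b + c = a + (b + c)" unfolding plus_ext_square_def
    by transfer (rule lie_cong.add_assoc)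
  show "a + b = b + a" unfolding plus_ext_square_def
    by transfer (rule lie_cong.add_comm)
  show "0 + a = a" unfolding plus_ext_square_def zero_ext_square_def
    by transfer (meson lie_cong.add_comm lie_cong.add_zero lie_cong.trans)
  show "- a + a = 0" unfolding plus_ext_square_def zero_ext_square_def uminus_ext_square_def
    by transfer (meson lie_cong.add_comm lie_cong.add_neg lie_cong.trans)
  show "a - b = a + - b" unfolding plus_ext_square_def minus_ext_square_def uminus_ext_square_def ..
qed

end

lemma ext_group_ops [simp]: "ext_add a b = a + b" "ext_zero = 0" "ext_neg a = - a"
  by (simp_all add: plus_ext_square_def zero_ext_square_def uminus_ext_square_def)

interpretation ext: lie_algebra ext_smul ext_br
  by (unfold_locales; (unfold ext_group_ops[symmetric])?; transfer; rule lie_cong.intros(13-))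

lemma abs_ext_square_simps [simp]:
  "abs_ext_square (LAdd a b) = abs_ext_square a + abs_ext_square b"
  "abs_ext_square LZero = 0"
  "abs_ext_square (LNeg a) = - abs_ext_square a"
  "abs_ext_square (LSmul l a) = ext_smul l (abs_ext_square a)"
  "abs_ext_square (LBr a b) = ext_br (abs_ext_square a) (abs_ext_square b)"
  by (simp_all only: ext_group_ops[symmetric] ext_add.abs_eq ext_zero.abs_eq ext_neg.abs_eq
      ext_smul.abs_eq ext_br.abs_eq)

definition wedge :: "('x, 'r::comm_ring_1) freelie \<Rightarrow> ('x, 'r) freelie \<Rightarrow> ('x, 'r) ext_square"
  where "wedge h g = abs_ext_square (W h g)"

lemma abs_ext_square_ext_rels:
  "(a, b) \<in> ext_rels \<or> (b, a) \<in> ext_rels \<Longrightarrow> abs_ext_square a = abs_ext_square b"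
  by (auto simp: ext_square.abs_eq_iff intro: lie_cong.rel lie_cong.sym)

lemma wedge_smul_left: "wedge (fl_smul l h) g = ext_smul l (wedge h g)"
  and wedge_smul_right: "wedge h (fl_smul l g) = ext_smul l (wedge h g)"
  and wedge_add_left: "wedge (h + h') g = wedge h g + wedge h' g"
  and wedge_add_right: "wedge h (g + g') = wedge h g + wedge h g'"
  and wedge_br_left: "wedge (fl_br h h') g = wedge h (fl_br h' g) - wedge h' (fl_br h g)"
  and ext_br_wedge: "ext_br (wedge h g) (wedge h' g') = wedge (fl_br h g) (fl_br h' g')"
  and wedge_self: "wedge h h = 0"
  unfolding wedge_def
  by (simp only: diff_conv_add_uminus abs_ext_square_simps[symmetric],
      rule abs_ext_square_ext_rels, simp add: ext_rels_def)+

lemma wedge_zero_left [simp]: "wedge 0 g = 0"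
  using wedge_add_left[of 0 0 g] by simp

lemma wedge_zero_right [simp]: "wedge h 0 = 0"
  using wedge_add_right[of h 0 0] by simp

lemma wedge_minus_right: "wedge h (- g) = - wedge h g"
  using wedge_add_right[of h g "- g"] by (simp add: eq_neg_iff_add_eq_0 add.commute)

lemma wedge_anticommute: "wedge g h = - wedge h g"
  using wedge_self[of "h + g"] wedge_self[of h] wedge_self[of g]
  by (simp add: wedge_add_left wedge_add_right eq_neg_iff_add_eq_0 add.commute)

lemma wedge_cocycle: "wedge a (fl_br b c) + (wedge b (fl_br c a) + wedge c (fl_br a b)) = 0"
proof -
  have "wedge c (fl_br b a) = - wedge c (fl_br a b)"
    by (subst fl.br_anticommute) (rule wedge_minus_right)
  then show ?thesis
    using wedge_br_left[of b c a] wedge_anticommute[of "fl_br b c" a]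
    by (simp add: algebra_simps eq_neg_iff_add_eq_0)
qed

primrec tau_term :: "('x, 'r::comm_ring_1) lterm \<Rightarrow> ('x, 'r) ext_square" where
  "tau_term (LGen x) = 0"
| "tau_term LZero = 0"
| "tau_term (LAdd a b) = tau_term a + tau_term b"
| "tau_term (LNeg a) = - tau_term a"
| "tau_term (LSmul l a) = ext_smul l (tau_term a)"
| "tau_term (LBr a b) = wedge (abs_freelie a) (abs_freelie b)"

lemma tau_term_lie_cong: "lie_cong {} a b \<Longrightarrow> tau_term a = tau_term b"
proof (induction rule: lie_cong.induct)
  case (cong_br a a' b b')
  then have "abs_freelie a = abs_freelie a'" "abs_freelie b = abs_freelie b'"
    by (simp_all add: freelie.abs_eq_iff)
  then show ?case by simp
qed (simp_all add: abs_freelie_simps ext.smul_add ext.add_smul ext.smul_smul ext.one_smul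
      wedge_add_left wedge_add_right wedge_smul_left wedge_smul_right wedge_self wedge_cocycle
      add.assoc add.commute)

lift_definition tau :: "('x, 'r::comm_ring_1) freelie \<Rightarrow> ('x, 'r) ext_square"
  is tau_term by (rule tau_term_lie_cong)

lemma tau_simps [simp]:
  "tau (x + y) = tau x + tau y"
  "tau 0 = 0"
  "tau (- x) = - tau x"
  "tau (fl_smul l x) = ext_smul l (tau x)"
  "tau (fl_br x y) = wedge x y"
  by (induct x rule: freelie.abs_induct, induct y rule: freelie.abs_induct,
      simp add: abs_freelie_simps[symmetric] tau.abs_eq)+

lemma ext_br_tau:
  assumes "x \<in> fl_derived" and "y \<in> fl_derived"
  shows "ext_br (tau x) (tau y) = wedge x y"
  using assms(1)
proof (induction rule: fl_derived.induct)
  case (2 u v)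
  from assms(2) show ?case
    by (induction rule: fl_derived.induct)
      (simp_all add: ext_br_wedge wedge_add_right wedge_smul_right ext.br_add_right ext.br_smul_right)
qed (simp_all add: wedge_add_left wedge_smul_left ext.br_add_left ext.br_smul_left)

lemma wedge_terms_simps [simp]:
  "LGen g \<in> wedge_terms \<longleftrightarrow> (\<exists>h k. g = Wedge h k)"
  "LZero \<in> wedge_terms"
  "LAdd a b \<in> wedge_terms \<longleftrightarrow> a \<in> wedge_terms \<and> b \<in> wedge_terms"
  "LNeg a \<in> wedge_terms \<longleftrightarrow> a \<in> wedge_terms"
  "LSmul l a \<in> wedge_terms \<longleftrightarrow> a \<in> wedge_terms"
  "LBr a b \<in> wedge_terms \<longleftrightarrow> a \<in> wedge_terms \<and> b \<in> wedge_terms"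
  by (auto simp: wedge_terms_def)

lemma xi_wedge_term_in_fl_derived: "a \<in> wedge_terms \<Longrightarrow> xi q a \<in> fl_derived"
  by (induction a) (auto simp: fl_derived_zero fl_derived_br fl_derived_add fl_derived_minus fl_derived_smul)

lemma abs_ext_square_eq_tau_xi: "a \<in> wedge_terms \<Longrightarrow> abs_ext_square a = tau (xi q a)"
proof (induction a)
  case (LGen g)
  then show ?case by (auto simp: wedge_def)
next
  case (LBr a b)
  then show ?case by (simp add: ext_br_tau xi_wedge_term_in_fl_derived)
qed simp_all

lemma xi_inj_on_wedge_terms:
  assumes "a \<in> wedge_terms" "b \<in> wedge_terms" "xi q a = xi q b"
  shows "qext_eq q a b"
proof -
  have "abs_ext_square a = abs_ext_square b"
    using assms by (simp add: abs_ext_square_eq_tau_xi[where q = q])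
  then have "lie_cong ext_rels a b"
    by (simp add: ext_square.abs_eq_iff)
  then show ?thesis
    by (rule lie_cong_mono) (simp add: qext_rels_def)
qed

lemma xi_image_wedge_terms: "xi q ` wedge_terms = fl_derived"
proof
  show "xi q ` wedge_terms \<subseteq> fl_derived"
    using xi_wedge_term_in_fl_derived by blast
  show "fl_derived \<subseteq> xi q ` wedge_terms"
  proof
    show "x \<in> xi q ` wedge_terms" if "x \<in> fl_derived" for x
      using that
    proof (induction rule: fl_derived.induct)
      case 1
      show ?case by (rule image_eqI[of _ _ LZero]) simp_all
    next
      case (2 h g)
      show ?case by (rule image_eqI[of _ _ "W h g"]) simp_all
    next
      case (3 a b)
      then obtain u v where "u \<in> wedge_terms" "v \<in> wedge_terms" "a = xi q u" "b = xi q v"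
        by blast
      then show ?case by (intro image_eqI[of _ _ "LAdd u v"]) simp_all
    next
      case (4 a l)
      then obtain u where "u \<in> wedge_terms" "a = xi q u"
        by blast
      then show ?case by (intro image_eqI[of _ _ "LSmul l u"]) simp_all
    qed
  qed
qed

theorem lemma6p3:
  fixes q :: nat
  assumes "q_torsion_free q TYPE('r::comm_ring_1)"
  shows "(\<forall>a b :: (('x, 'r) qgen, 'r) lterm. qext_eq q a b \<longrightarrow> xi q a = xi q b)
       \<and> (\<forall>a \<in> (wedge_terms :: (('x, 'r) qgen, 'r) lterm set). \<forall>b \<in> wedge_terms.
            xi q a = xi q b \<longrightarrow> qext_eq q a b)
       \<and> xi q ` (wedge_terms :: (('x, 'r) qgen, 'r) lterm set) = fl_derived"
  using xi_qext_eq xi_inj_on_wedge_terms xi_image_wedge_terms by blast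

end
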